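(* Let $\Psi$ be an Orlicz function and $\mu$ a finite positive Borel measure on $\overline{\mathbb D}$. 1) $\mu$ is a $\Psi$-Carleson measure if and only if there is $C\ge1$ with $\|u_{\xi,1-h}\|_{L^\Psi(\mu)}\le\dfrac{C}{\Psi^{-1}(1/h)}$ for every $\xi\in\mathbb T$ and every $h\in(0,1)$. 2) $\mu$ is a vanishing $\Psi$-Carleson measure if and only if $\lim_{h\to0}\sup_{\xi\in\mathbb T}\Psi^{-1}(1/h)\,\|u_{\xi,1-h}\|_{L^\Psi(\mu)}=0$.
   Context: An Orlicz function is a continuous, strictly convex, increasing $\Psi\colon[0,\infty)\to[0,\infty)$ with $\Psi(0)=0$ and $\Psi(x)/x\to\infty$. $\|f\|_{L^\Psi(\mu)}=\inf\{C>0:\int\Psi(|f|/C)\,d\mu\le1\}$. For $\xi\in\mathbb T$, $0\le r<1$, $u_{\xi,r}(z)=\big(\frac{1-r}{1-\bar\xi rz}\big)^2$ (continuous on $\overline{\mathbb D}$). $W(\xi,h)=\{z\in\overline{\mathbb D}:1-h<|z|\le1,\ |\arg(z\bar\xi)|<h\}$, $\rho_\mu(h)=\sup_{\xi}\mu(W(\xi,h))$. $\mu$ is $\Psi$-Carleson if there is $A>0$ with $\mu(W(\xi,h))\le1/\Psi(A\Psi^{-1}(1/h))$ for all $\xi\in\mathbb T$, $h\in(0,1)$; it is vanishing $\Psi$-Carleson if for every $A>0$, $\lim_{h\to0}\Psi(A\Psi^{-1}(1/h))\,\rho_\mu(h)=0$. *)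

theory Defs
  imports "HOL-Analysis.Analysis"
begin

definition strictly_convex_on :: "real set \<Rightarrow> (real \<Rightarrow> real) \<Rightarrow> bool" where
  "strictly_convex_on S f \<longleftrightarrow>
     (\<forall>x\<in>S. \<forall>y\<in>S. \<forall>t. x \<noteq> y \<and> 0 < t \<and> t < 1 \<longrightarrow>
        f ((1 - t) * x + t * y) < (1 - t) * f x + t * f y)"

definition orlicz_function :: "(real \<Rightarrow> real) \<Rightarrow> bool" where
  "orlicz_function \<Psi> \<longleftrightarrow>
     continuous_on {0..} \<Psi> \<and>
     strictly_convex_on {0..} \<Psi> \<and>
     strict_mono_on {0..} \<Psi> \<and>
     \<Psi> 0 = 0 \<and>
     (\<forall>x\<ge>0. \<Psi> x \<ge> 0) \<and>
     filterlim (\<lambda>x. \<Psi> x / x) at_top at_top"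

definition orlicz_inv :: "(real \<Rightarrow> real) \<Rightarrow> real \<Rightarrow> real" where
  "orlicz_inv \<Psi> = inv_into {0..} \<Psi>"

definition orlicz_norm :: "(real \<Rightarrow> real) \<Rightarrow> 'a measure \<Rightarrow> ('a \<Rightarrow> complex) \<Rightarrow> real" where
  "orlicz_norm \<Psi> \<mu> f =
     Inf {C. C > 0 \<and> (\<integral>\<^sup>+ x. ennreal (\<Psi> (norm (f x) / C)) \<partial>\<mu>) \<le> 1}"

definition u_fun :: "complex \<Rightarrow> real \<Rightarrow> complex \<Rightarrow> complex" where
  "u_fun \<xi> r z = ((1 - of_real r) / (1 - cnj \<xi> * of_real r * z)) ^ 2"

definition window :: "complex \<Rightarrow> real \<Rightarrow> complex set" where
  "window \<xi> h = {z. norm z \<le> 1 \<and> 1 - h < norm z \<and> \<bar>Arg (z * cnj \<xi>)\<bar> < h}"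

definition rho :: "complex measure \<Rightarrow> real \<Rightarrow> real" where
  "rho \<mu> h = (SUP \<xi>\<in>sphere 0 1. measure \<mu> (window \<xi> h))"

definition psi_carleson :: "(real \<Rightarrow> real) \<Rightarrow> complex measure \<Rightarrow> bool" where
  "psi_carleson \<Psi> \<mu> \<longleftrightarrow>
     (\<exists>A>0. \<forall>\<xi>\<in>sphere 0 1. \<forall>h\<in>{0<..<1}.
        measure \<mu> (window \<xi> h) \<le> 1 / \<Psi> (A * orlicz_inv \<Psi> (1 / h)))"

definition vanishing_psi_carleson :: "(real \<Rightarrow> real) \<Rightarrow> complex measure \<Rightarrow> bool" where
  "vanishing_psi_carleson \<Psi> \<mu> \<longleftrightarrow>
     (\<forall>A>0. ((\<lambda>h. \<Psi> (A * orlicz_inv \<Psi> (1 / h)) * rho \<mu> h) \<longlongrightarrow> 0) (at_right 0))"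

end

theory Submission
  imports Defs
begin

text \<open>
  The kernel \<open>u = u_fun \<xi> (1 - h)\<close> is bounded by \<open>1\<close> on the disc, at least \<open>1/5\<close> on the window
  \<open>W(\<xi>,h)\<close> and at most \<open>4h\<^sup>2/t\<^sup>2\<close> outside \<open>W(\<xi>,t)\<close>. Testing the Luxemburg norm on
  \<open>W(\<xi>,h)\<close> turns a bound \<open>\<parallel>u\<parallel> \<le> N / \<Psi>\<^sup>-\<^sup>1(1/h)\<close> into the Carleson estimate
  \<open>\<mu>(W(\<xi>,h)) \<Psi>(\<Psi>\<^sup>-\<^sup>1(1/h) / 10N) \<le> 1\<close>.
  Conversely, cut the disc into the dyadic layers \<open>W(\<xi>,2\<^sup>kh) - W(\<xi>,2\<^sup>k\<^sup>-\<^sup>1h)\<close>, on which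
  \<open>|u| \<le> 16/4\<^sup>k\<close>. With \<open>\<Psi>(sx) \<le> s\<Psi>(x)\<close> and \<open>s\<Psi>\<^sup>-\<^sup>1(x) \<le> \<Psi>\<^sup>-\<^sup>1(sx)\<close> for \<open>0 \<le> s \<le> 1\<close>,
  the Carleson bound at scale \<open>2\<^sup>kh\<close> makes the \<open>k\<close>-th layer contribute at most \<open>2\<^sup>-\<^sup>k/4\<close> to the
  modular at level \<open>C/\<Psi>\<^sup>-\<^sup>1(1/h)\<close>, and the rest of the disc contributes at most \<open>1/2\<close> through
  the total mass. The vanishing versions run the same two estimates with small constants, using
  the Carleson bound only at the scales where it has already become small.
\<close>

lemma orlicz_function_less:
  assumes "orlicz_function \<Psi>" "0 \<le> x" "x < y"
  shows "\<Psi> x < \<Psi> y"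
  using assms unfolding orlicz_function_def strict_mono_on_def by auto

lemma orlicz_function_mono:
  assumes "orlicz_function \<Psi>" "0 \<le> x" "x \<le> y"
  shows "\<Psi> x \<le> \<Psi> y"
  using orlicz_function_less[OF assms(1,2), of y] assms(3) by (cases "x = y") auto

lemma orlicz_function_nonneg:
  assumes "orlicz_function \<Psi>" "0 \<le> x"
  shows "0 \<le> \<Psi> x"
  using assms unfolding orlicz_function_def by auto

lemma orlicz_function_pos:
  assumes "orlicz_function \<Psi>" "0 < x"
  shows "0 < \<Psi> x"
  using orlicz_function_less[OF assms(1) order_refl assms(2)] assms(1)
  unfolding orlicz_function_def by auto

lemma orlicz_function_scale_le:
  assumes "orlicz_function \<Psi>" "0 \<le> t" "t \<le> 1" "0 \<le> x"
  shows "\<Psi> (t * x) \<le> t * \<Psi> x"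
proof -
  have \<Psi>0: "\<Psi> 0 = 0" and conv: "strictly_convex_on {0..} \<Psi>"
    using assms(1) unfolding orlicz_function_def by auto
  consider "t = 0" | "t = 1" | "x = 0" | "0 < t" "t < 1" "x \<noteq> 0"
    using assms by linarith
  then show ?thesis
  proof cases
    case 4
    then have "\<Psi> ((1 - t) * 0 + t * x) < (1 - t) * \<Psi> 0 + t * \<Psi> x"
      using assms(4) by (intro conv[unfolded strictly_convex_on_def, rule_format]) auto
    then show ?thesis using \<Psi>0 by simp
  qed (use \<Psi>0 in auto)
qed

lemma orlicz_function_surj:
  assumes "orlicz_function \<Psi>" "0 \<le> s"
  shows "s \<in> \<Psi> ` {0..}"
proof -
  have "filterlim (\<lambda>x. \<Psi> x / x) at_top at_top"
    using assms(1) unfolding orlicz_function_def by auto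
  then obtain N where N: "\<And>x. N \<le> x \<Longrightarrow> 1 \<le> \<Psi> x / x"
    by (auto simp: filterlim_at_top eventually_at_top_linorder)
  define b where "b = max N (max s 1)"
  have "1 \<le> \<Psi> b / b" by (rule N) (simp add: b_def)
  moreover have "1 \<le> b" by (simp add: b_def)
  ultimately have "b \<le> \<Psi> b" by (simp add: le_divide_eq)
  then have "s \<le> \<Psi> b" by (simp add: b_def)
  moreover have "\<Psi> 0 \<le> s" "continuous_on {0..b} \<Psi>" "0 \<le> b"
    using assms unfolding orlicz_function_def b_def by (auto intro: continuous_on_subset)
  ultimately obtain x where "0 \<le> x" "\<Psi> x = s"
    using IVT'[of \<Psi> 0 s b] by auto
  then show ?thesis by force
qed

lemma orlicz_inv_nonneg:
  assumes "orlicz_function \<Psi>" "0 \<le> s"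
  shows "0 \<le> orlicz_inv \<Psi> s"
  using inv_into_into[OF orlicz_function_surj[OF assms]] unfolding orlicz_inv_def by simp

lemma orlicz_orlicz_inv:
  assumes "orlicz_function \<Psi>" "0 \<le> s"
  shows "\<Psi> (orlicz_inv \<Psi> s) = s"
  using f_inv_into_f[OF orlicz_function_surj[OF assms]] unfolding orlicz_inv_def .

lemma orlicz_inv_orlicz:
  assumes "orlicz_function \<Psi>" "0 \<le> x"
  shows "orlicz_inv \<Psi> (\<Psi> x) = x"
proof -
  have "inj_on \<Psi> {0..}"
    using assms(1) strict_mono_on_imp_inj_on unfolding orlicz_function_def by blast
  then show ?thesis unfolding orlicz_inv_def using assms(2) by (simp add: inv_into_f_f)
qed

lemma orlicz_inv_mono:
  assumes "orlicz_function \<Psi>" "0 \<le> s" "s \<le> t"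
  shows "orlicz_inv \<Psi> s \<le> orlicz_inv \<Psi> t"
proof (rule ccontr)
  assume "\<not> ?thesis"
  then have "\<Psi> (orlicz_inv \<Psi> t) < \<Psi> (orlicz_inv \<Psi> s)"
    using assms by (intro orlicz_function_less[OF assms(1)] orlicz_inv_nonneg) auto
  then show False using assms by (simp add: orlicz_orlicz_inv)
qed

lemma orlicz_inv_pos:
  assumes "orlicz_function \<Psi>" "0 < s"
  shows "0 < orlicz_inv \<Psi> s"
proof -
  have "\<Psi> (orlicz_inv \<Psi> s) \<noteq> 0" using assms by (simp add: orlicz_orlicz_inv)
  moreover have "\<Psi> 0 = 0" using assms(1) unfolding orlicz_function_def by simp
  ultimately have "orlicz_inv \<Psi> s \<noteq> 0" by force
  then show ?thesis using orlicz_inv_nonneg[OF assms(1), of s] assms(2) by simp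
qed

lemma orlicz_inv_scale_ge:
  assumes "orlicz_function \<Psi>" "0 \<le> t" "t \<le> 1" "0 \<le> s"
  shows "t * orlicz_inv \<Psi> s \<le> orlicz_inv \<Psi> (t * s)"
proof -
  have inv0: "0 \<le> orlicz_inv \<Psi> s" using assms by (intro orlicz_inv_nonneg)
  have "\<Psi> (t * orlicz_inv \<Psi> s) \<le> t * s"
    using orlicz_function_scale_le[OF assms(1-3) inv0] assms by (simp add: orlicz_orlicz_inv)
  then have "orlicz_inv \<Psi> (\<Psi> (t * orlicz_inv \<Psi> s)) \<le> orlicz_inv \<Psi> (t * s)"
    using assms inv0 by (intro orlicz_inv_mono[OF assms(1)] orlicz_function_nonneg[OF assms(1)]) auto
  then show ?thesis using assms inv0 by (simp add: orlicz_inv_orlicz)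
qed

definition orlicz_modular :: "(real \<Rightarrow> real) \<Rightarrow> 'a measure \<Rightarrow> ('a \<Rightarrow> complex) \<Rightarrow> real \<Rightarrow> ennreal" where
  "orlicz_modular \<Psi> M f C = (\<integral>\<^sup>+x. ennreal (\<Psi> (norm (f x) / C)) \<partial>M)"

lemma orlicz_norm_eq_Inf_modular:
  "orlicz_norm \<Psi> M f = Inf {C. 0 < C \<and> orlicz_modular \<Psi> M f C \<le> 1}"
  unfolding orlicz_norm_def orlicz_modular_def ..

lemma orlicz_norm_le:
  assumes "0 < C" "orlicz_modular \<Psi> M f C \<le> 1"
  shows "orlicz_norm \<Psi> M f \<le> C"
  unfolding orlicz_norm_eq_Inf_modular using assms by (intro cInf_lower bdd_belowI[of _ 0]) auto

lemma orlicz_norm_nonneg: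
  assumes "0 < C" "orlicz_modular \<Psi> M f C \<le> 1"
  shows "0 \<le> orlicz_norm \<Psi> M f"
  unfolding orlicz_norm_eq_Inf_modular using assms by (intro cInf_greatest) auto

lemma orlicz_modular_antimono:
  assumes "orlicz_function \<Psi>" "0 < C" "C \<le> D"
  shows "orlicz_modular \<Psi> M f D \<le> orlicz_modular \<Psi> M f C"
  unfolding orlicz_modular_def
proof (intro nn_integral_mono ennreal_leI orlicz_function_mono[OF assms(1)])
  show "norm (f x) / D \<le> norm (f x) / C" for x
    using assms by (intro divide_left_mono) auto
qed (use assms in auto)

text \<open>The witness \<open>C\<close> is needed only because \<open>Inf {}\<close> is unspecified for \<^typ>\<open>real\<close>.\<close>
lemma orlicz_modular_le_one_if_norm_less:
  assumes "orlicz_function \<Psi>" "0 < C" "orlicz_modular \<Psi> M f C \<le> 1"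
    and "orlicz_norm \<Psi> M f < D"
  shows "orlicz_modular \<Psi> M f D \<le> 1"
proof -
  obtain C' where C': "0 < C'" "orlicz_modular \<Psi> M f C' \<le> 1" "C' < D"
    using cInf_lessD[of "{C. 0 < C \<and> orlicz_modular \<Psi> M f C \<le> 1}" D] assms
    unfolding orlicz_norm_eq_Inf_modular by auto
  then show ?thesis
    using orlicz_modular_antimono[OF assms(1), of C' D M f] by simp
qed

lemma orlicz_modular_le_one_if_bounded:
  assumes "orlicz_function \<Psi>" "finite_measure M"
    and "\<And>x. x \<in> space M \<Longrightarrow> norm (f x) \<le> 1"
    and "1 \<le> C" "\<Psi> 1 * measure M (space M) \<le> C"
  shows "orlicz_modular \<Psi> M f C \<le> 1"
proof -
  have "orlicz_modular \<Psi> M f C \<le> (\<integral>\<^sup>+x. ennreal (\<Psi> 1 / C) \<partial>M)"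
    unfolding orlicz_modular_def
  proof (rule nn_integral_mono)
    fix x assume "x \<in> space M"
    then have "\<Psi> (norm (f x) / C) \<le> \<Psi> (1 / C)"
      using assms by (intro orlicz_function_mono[OF assms(1)] divide_right_mono) auto
    also have "\<dots> \<le> 1 / C * \<Psi> 1"
      using orlicz_function_scale_le[OF assms(1), of "1 / C" 1] assms(4) by simp
    finally show "ennreal (\<Psi> (norm (f x) / C)) \<le> ennreal (\<Psi> 1 / C)"
      by (intro ennreal_leI) simp
  qed
  also have "\<dots> = ennreal (\<Psi> 1 / C * measure M (space M))"
    using assms orlicz_function_nonneg[OF assms(1), of 1]
    by (simp add: finite_measure.emeasure_eq_measure ennreal_mult'' del: times_divide_eq_left)
  also have "\<dots> \<le> ennreal 1"
    using assms by (intro ennreal_leI) (simp add: field_simps)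
  finally show ?thesis by simp
qed

lemma orlicz_dyadic_term_le:
  assumes "orlicz_function \<Psi>" "0 < h" "0 < A" "64 / A \<le> C"
  shows "\<Psi> (16 / 4 ^ k * orlicz_inv \<Psi> (1 / h) / C)
           \<le> (1 / 2) ^ k / 4 * \<Psi> (A * orlicz_inv \<Psi> (1 / (2 ^ k * h)))"
proof -
  define y where "y = orlicz_inv \<Psi> (1 / h)"
  define x where "x = A * y / 2 ^ k"
  have y0: "0 < y" unfolding y_def using assms by (simp add: orlicz_inv_pos)
  have x0: "0 \<le> x" unfolding x_def using y0 assms by simp
  have "0 < 64 / A" using assms(3) by simp
  then have C0: "0 < C" using assms(4) by linarith
  have four: "(4::real) ^ k = 2 ^ k * 2 ^ k" by (simp flip: power_mult_distrib)
  have "1 / 2 ^ k * y \<le> orlicz_inv \<Psi> (1 / 2 ^ k * (1 / h))"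
    unfolding y_def using assms by (intro orlicz_inv_scale_ge) auto
  then have "x \<le> A * orlicz_inv \<Psi> (1 / (2 ^ k * h))"
    unfolding x_def using mult_left_mono[of _ _ A] assms by fastforce
  then have Px: "\<Psi> x \<le> \<Psi> (A * orlicz_inv \<Psi> (1 / (2 ^ k * h)))"
    using x0 by (intro orlicz_function_mono[OF assms(1)])
  have "16 / C \<le> A / 4" using assms C0 by (simp add: field_simps)
  then have "16 / C * (y / 4 ^ k) \<le> A / 4 * (y / 4 ^ k)"
    using y0 by (intro mult_right_mono) auto
  then have "16 / 4 ^ k * y / C \<le> (1 / 2) ^ k / 4 * x"
    unfolding x_def four by (simp add: field_simps power_divide)
  then have "\<Psi> (16 / 4 ^ k * y / C) \<le> \<Psi> ((1 / 2) ^ k / 4 * x)"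
    using y0 C0 by (intro orlicz_function_mono[OF assms(1)]) auto
  also have "\<dots> \<le> (1 / 2) ^ k / 4 * \<Psi> x"
    using x0 power_le_one[of "1 / 2 :: real" k] by (intro orlicz_function_scale_le[OF assms(1)]) auto
  also have "\<dots> \<le> (1 / 2) ^ k / 4 * \<Psi> (A * orlicz_inv \<Psi> (1 / (2 ^ k * h)))"
    using Px by (intro mult_left_mono) auto
  finally show ?thesis unfolding y_def .
qed

lemma orlicz_dyadic_tail_le:
  assumes "orlicz_function \<Psi>" "0 < h" "h \<le> 1" "0 < C" "0 < d" "d \<le> 2 ^ k * h"
    and "16 * h \<le> d\<^sup>2 * C"
  shows "\<Psi> (16 / 4 ^ k * orlicz_inv \<Psi> (1 / h) / C) \<le> 16 * h / (d\<^sup>2 * C)"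
proof -
  define y where "y = orlicz_inv \<Psi> (1 / h)"
  define c where "c = 16 * h / (d\<^sup>2 * C)"
  have y0: "0 < y" unfolding y_def using assms by (simp add: orlicz_inv_pos)
  have c: "0 < c" "c \<le> 1" unfolding c_def using assms by (auto simp: field_simps)
  have "h * y \<le> orlicz_inv \<Psi> (h * (1 / h))"
    unfolding y_def using assms by (intro orlicz_inv_scale_ge) auto
  then have hy: "h * y \<le> orlicz_inv \<Psi> 1" using assms by simp
  have "d\<^sup>2 \<le> (2 ^ k * h)\<^sup>2" using assms by (intro power_mono) auto
  also have "\<dots> = (2 ^ k * 2 ^ k) * h\<^sup>2" by (simp add: power2_eq_square algebra_simps)
  also have "\<dots> = 4 ^ k * h\<^sup>2" by (simp flip: power_mult_distrib)
  finally have "16 / 4 ^ k * y / C \<le> c * (h * y)"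
    unfolding c_def using assms y0 by (simp add: field_simps power2_eq_square mult_left_mono)
  also have "\<dots> \<le> c * orlicz_inv \<Psi> 1" using hy c by simp
  finally have "\<Psi> (16 / 4 ^ k * y / C) \<le> \<Psi> (c * orlicz_inv \<Psi> 1)"
    using y0 assms by (intro orlicz_function_mono[OF assms(1)]) auto
  also have "\<dots> \<le> c * \<Psi> (orlicz_inv \<Psi> 1)"
    using c assms by (intro orlicz_function_scale_le orlicz_inv_nonneg) auto
  finally show ?thesis using assms unfolding y_def c_def by (simp add: orlicz_orlicz_inv)
qed

lemma sum_half_powers_le: "(\<Sum>k\<le>K. (1 / 2 :: real) ^ k) \<le> 2"
proof -
  have "(\<Sum>k\<le>K. (1 / 2 :: real) ^ k) \<le> (\<Sum>k. (1 / 2) ^ k)"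
    by (intro sum_le_suminf summable_geometric) auto
  also have "\<dots> = 2" by (simp add: suminf_geometric)
  finally show ?thesis .
qed

lemma obtain_dyadic_scale:
  fixes h d :: real
  assumes "0 < h" "h < d"
  obtains K where "2 ^ K * h < d" "d \<le> 2 ^ Suc K * h"
proof -
  obtain n where "d / h < 2 ^ n" using real_arch_pow[of 2 "d / h"] by auto
  then have "d \<le> 2 ^ n * h" using assms by (simp add: divide_less_eq)
  then obtain K where "\<not> d \<le> 2 ^ K * h" "d \<le> 2 ^ Suc K * h"
    using ex_least_nat_less[of "\<lambda>n. d \<le> 2 ^ n * h" n] assms by auto
  then show ?thesis by (intro that) auto
qed

lemma orlicz_dyadic_sum_le_half:
  assumes "orlicz_function \<Psi>" "0 < h" "0 < A" "64 / A \<le> C"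
    and "\<And>k. k \<le> K \<Longrightarrow> 0 \<le> m k"
    and "\<And>k. k \<le> K \<Longrightarrow> m k * \<Psi> (A * orlicz_inv \<Psi> (1 / (2 ^ k * h))) \<le> 1"
  shows "(\<Sum>k\<le>K. \<Psi> (16 / 4 ^ k * orlicz_inv \<Psi> (1 / h) / C) * m k) \<le> 1 / 2"
proof -
  have "\<Psi> (16 / 4 ^ k * orlicz_inv \<Psi> (1 / h) / C) * m k
      \<le> (1 / 2) ^ k / 4 * (\<Psi> (A * orlicz_inv \<Psi> (1 / (2 ^ k * h))) * m k)" if "k \<le> K" for k
    using mult_right_mono[OF orlicz_dyadic_term_le[OF assms(1-4)] assms(5)[OF that]]
    by (simp only: mult.assoc)
  then have "(\<Sum>k\<le>K. \<Psi> (16 / 4 ^ k * orlicz_inv \<Psi> (1 / h) / C) * m k)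
      \<le> (\<Sum>k\<le>K. (1 / 2) ^ k / 4 * (\<Psi> (A * orlicz_inv \<Psi> (1 / (2 ^ k * h))) * m k))"
    by (intro sum_mono) simp
  also have "\<dots> \<le> (\<Sum>k\<le>K. (1 / 2) ^ k / 4)"
    using assms(6) by (intro sum_mono mult_left_le) (auto simp: mult.commute)
  also have "\<dots> = (\<Sum>k\<le>K. (1 / 2 :: real) ^ k) / 4" by (simp add: sum_divide_distrib)
  also have "\<dots> \<le> 1 / 2" using sum_half_powers_le[of K] by simp
  finally show ?thesis .
qed

lemma tendsto_zero_if_eventually_le:
  fixes f :: "'a \<Rightarrow> real"
  assumes "\<forall>\<^sub>F x in F. 0 \<le> f x" "\<And>\<epsilon>. 0 < \<epsilon> \<Longrightarrow> \<forall>\<^sub>F x in F. f x \<le> \<epsilon>"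
  shows "(f \<longlongrightarrow> 0) F"
proof (rule order_tendstoI)
  show "\<forall>\<^sub>F x in F. a < f x" if "a < 0" for a
    using assms(1) by eventually_elim (use that in auto)
  show "\<forall>\<^sub>F x in F. f x < a" if "0 < a" for a
  proof -
    have "\<forall>\<^sub>F x in F. f x \<le> a / 2" using that by (intro assms(2)) simp
    then show ?thesis by eventually_elim (use that in auto)
  qed
qed

lemma one_minus_cos_le: "1 - cos x \<le> (x::real)\<^sup>2 / 2"
proof -
  have "\<bar>sin (x / 2)\<bar>\<^sup>2 \<le> \<bar>x / 2\<bar>\<^sup>2"
    by (intro power_mono abs_sin_x_le_abs_x) simp
  then show ?thesis using cos_double_sin[of "x / 2"] by (simp add: power_divide)
qed

lemma sin_ge_half_self:
  fixes x :: real
  assumes "0 \<le> x" "x \<le> 1"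
  shows "x / 2 \<le> sin x"
proof -
  have "0 \<le> cos u - 1 / 2" if "0 \<le> u" "u \<le> x" for u :: real
  proof -
    have "u\<^sup>2 \<le> 1" using that assms by (intro power_le_one) auto
    then show ?thesis using one_minus_cos_le[of u] by linarith
  qed
  moreover have "((\<lambda>u. sin u - u / 2) has_real_derivative cos u - 1 / 2) (at u)" for u
    by (auto intro!: derivative_eq_intros)
  ultimately have "sin 0 - 0 / 2 \<le> sin x - x / 2"
    by (intro DERIV_nonneg_imp_nondecreasing[OF assms(1)]) blast
  then show ?thesis by simp
qed

lemma sin_squared_ge:
  assumes "0 < t" "t \<le> 1" "t \<le> \<bar>\<theta>\<bar>" "\<bar>\<theta>\<bar> \<le> pi" "0 < cos \<theta>"
  shows "t\<^sup>2 / 4 \<le> (sin \<theta>)\<^sup>2"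
proof -
  have cos_abs: "cos \<bar>\<theta>\<bar> = cos \<theta>" and sin_sq_abs: "(sin \<bar>\<theta>\<bar>)\<^sup>2 = (sin \<theta>)\<^sup>2"
    by (cases "0 \<le> \<theta>"; simp)+
  have "\<bar>\<theta>\<bar> < pi / 2"
  proof (rule ccontr)
    assume "\<not> \<bar>\<theta>\<bar> < pi / 2"
    then have "cos \<bar>\<theta>\<bar> \<le> cos (pi / 2)" using assms by (intro cos_monotone_0_pi_le) auto
    then show False using assms cos_abs by simp
  qed
  then have "sin t \<le> sin \<bar>\<theta>\<bar>"
    using assms pi_gt3 by (intro sin_monotone_2pi_le) auto
  then have "t / 2 \<le> sin \<bar>\<theta>\<bar>" using sin_ge_half_self[of t] assms by linarith
  then have "(t / 2)\<^sup>2 \<le> (sin \<bar>\<theta>\<bar>)\<^sup>2" using assms by (intro power_mono) auto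
  then show ?thesis by (simp add: sin_sq_abs power_divide)
qed

lemma norm_one_minus_scaled_sq:
  fixes w :: complex
  shows "(norm (1 - of_real r * w))\<^sup>2 = (1 - r * norm w)\<^sup>2 + 2 * (r * norm w) * (1 - cos (Arg w))"
    and "(norm (1 - of_real r * w))\<^sup>2 = (r * norm w - cos (Arg w))\<^sup>2 + (sin (Arg w))\<^sup>2"
proof -
  define \<rho> c s where "\<rho> = r * norm w" and "c = cos (Arg w)" and "s = sin (Arg w)"
  have Re: "Re w = norm w * c" and Im: "Im w = norm w * s"
    unfolding c_def s_def
    using Re_rcis[of "norm w" "Arg w"] Im_rcis[of "norm w" "Arg w"] by (simp_all only: rcis_cmod_Arg)
  have "(norm (1 - of_real r * w))\<^sup>2 = (1 - r * Re w)\<^sup>2 + (r * Im w)\<^sup>2"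
    by (simp add: cmod_power2)
  also have "\<dots> = (1 - \<rho> * c)\<^sup>2 + \<rho>\<^sup>2 * s\<^sup>2"
    unfolding Re Im \<rho>_def by (simp add: power2_eq_square mult_ac)
  also have "\<dots> = 1 - 2 * \<rho> * c + \<rho>\<^sup>2"
    using sin_cos_squared_add[of "Arg w"] unfolding s_def[symmetric] c_def[symmetric]
    by (simp add: power2_eq_square algebra_simps flip: distrib_left)
  finally have "(norm (1 - of_real r * w))\<^sup>2 = 1 - 2 * \<rho> * c + \<rho>\<^sup>2" .
  then show
    "(norm (1 - of_real r * w))\<^sup>2 = (1 - r * norm w)\<^sup>2 + 2 * (r * norm w) * (1 - cos (Arg w))"
    "(norm (1 - of_real r * w))\<^sup>2 = (r * norm w - cos (Arg w))\<^sup>2 + (sin (Arg w))\<^sup>2"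
    using sin_cos_squared_add[of "Arg w"]
    unfolding \<rho>_def[symmetric] c_def[symmetric] s_def[symmetric]
    by (simp_all add: power2_eq_square algebra_simps)
qed

lemma norm_u_fun:
  assumes "0 \<le> h"
  shows "norm (u_fun \<xi> (1 - h) z) = h\<^sup>2 / (norm (1 - of_real (1 - h) * (z * cnj \<xi>)))\<^sup>2"
proof -
  have "u_fun \<xi> (1 - h) z = (of_real h / (1 - of_real (1 - h) * (z * cnj \<xi>)))\<^sup>2"
    unfolding u_fun_def by (simp add: mult_ac)
  then show ?thesis using assms by (simp add: norm_divide norm_power power_divide)
qed

lemma norm_u_fun_le_one:
  assumes "norm \<xi> = 1" "0 < h" "h \<le> 1" "norm z \<le> 1"
  shows "norm (u_fun \<xi> (1 - h) z) \<le> 1"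
proof -
  let ?D = "norm (1 - of_real (1 - h) * (z * cnj \<xi>))"
  have "h \<le> 1 - (1 - h) * norm z"
    using assms mult_left_le[of "norm z" "1 - h"] by simp
  also have "\<dots> \<le> ?D"
    using norm_triangle_ineq2[of 1 "of_real (1 - h) * (z * cnj \<xi>)"] assms
    by (simp add: norm_mult del: of_real_diff)
  finally have "h\<^sup>2 \<le> ?D\<^sup>2" using assms by (intro power_mono) auto
  then show ?thesis using assms by (simp add: norm_u_fun divide_le_eq_1)
qed

lemma norm_u_fun_window_ge:
  assumes "norm \<xi> = 1" "0 < h" "h < 1" "z \<in> window \<xi> h"
  shows "1 / 5 \<le> norm (u_fun \<xi> (1 - h) z)"
proof -
  define w where "w = z * cnj \<xi>"
  define a where "a = (1 - h) * norm w"
  define D where "D = (norm (1 - of_real (1 - h) * w))\<^sup>2"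
  have z: "norm z \<le> 1" "1 - h < norm z" "\<bar>Arg w\<bar> < h"
    using assms(4) unfolding window_def w_def by auto
  have "norm w = norm z" using assms(1) by (simp add: w_def norm_mult)
  then have a: "(1 - h)\<^sup>2 \<le> a" "a \<le> 1 - h"
    unfolding a_def power2_eq_square using z assms
    by (auto intro: mult_left_mono mult_left_le)
  have a0: "0 \<le> a" using a(1) zero_le_power2[of "1 - h"] by linarith
  have "(1 - h)\<^sup>2 = 1 - 2 * h + h * h" by (simp add: power2_eq_square algebra_simps)
  then have "(1 - a)\<^sup>2 \<le> (2 * h)\<^sup>2"
    using a assms zero_le_square[of h] by (intro power_mono; linarith)
  moreover have "2 * a * (1 - cos (Arg w)) \<le> 2 * 1 * (h\<^sup>2 / 2)"
  proof (intro mult_mono)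
    have "(Arg w)\<^sup>2 \<le> h\<^sup>2" using z(3) power_mono[of "\<bar>Arg w\<bar>" h 2] by simp
    then show "1 - cos (Arg w) \<le> h\<^sup>2 / 2" using one_minus_cos_le[of "Arg w"] by linarith
  qed (use a a0 assms in auto)
  ultimately have "D \<le> 5 * h\<^sup>2"
    unfolding D_def norm_one_minus_scaled_sq(1) a_def[symmetric] by (simp add: power_mult_distrib)
  moreover have "0 < D"
  proof -
    have "0 < h\<^sup>2" "h\<^sup>2 \<le> (1 - a)\<^sup>2" using a assms by (auto intro: power_mono)
    moreover have "0 \<le> 2 * a * (1 - cos (Arg w))" using a0 by simp
    ultimately show ?thesis
      unfolding D_def norm_one_minus_scaled_sq(1) a_def[symmetric] by linarith
  qed
  ultimately have "h\<^sup>2 / (5 * h\<^sup>2) \<le> h\<^sup>2 / D"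
    using assms by (intro divide_left_mono) auto
  then show ?thesis using assms by (simp add: norm_u_fun D_def w_def)
qed

lemma norm_u_fun_outside_window_le:
  assumes "norm \<xi> = 1" "0 < h" "h \<le> 1" "0 < t" "t \<le> 1" "norm z \<le> 1" "z \<notin> window \<xi> t"
  shows "norm (u_fun \<xi> (1 - h) z) \<le> 4 * h\<^sup>2 / t\<^sup>2"
proof -
  define w where "w = z * cnj \<xi>"
  define a where "a = (1 - h) * norm w"
  define D where "D = (norm (1 - of_real (1 - h) * w))\<^sup>2"
  have nw: "norm w = norm z" using assms(1) by (simp add: w_def norm_mult)
  have a: "0 \<le> a" "a \<le> norm z"
    unfolding a_def nw using assms by (auto intro: mult_left_le_one_le)
  have D0: "0 \<le> D" unfolding D_def by simp
  have "t\<^sup>2 / 4 \<le> D"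
  proof (cases "norm z \<le> 1 - t")
    case True
    have "t\<^sup>2 \<le> (1 - a)\<^sup>2" using True a assms by (intro power_mono) auto
    also have "\<dots> \<le> D"
      unfolding D_def norm_one_minus_scaled_sq(1) a_def[symmetric] using a by simp
    finally show ?thesis using D0 by simp
  next
    case False
    then have \<theta>: "t \<le> \<bar>Arg w\<bar>" using assms unfolding window_def w_def by auto
    have D: "D = (a - cos (Arg w))\<^sup>2 + (sin (Arg w))\<^sup>2"
      unfolding D_def norm_one_minus_scaled_sq(2) a_def ..
    show ?thesis
    proof (cases "cos (Arg w) \<le> 0")
      case True
      then have "(cos (Arg w))\<^sup>2 \<le> (a - cos (Arg w))\<^sup>2"
        using a power_mono[of "- cos (Arg w)" "a - cos (Arg w)" 2] by simp
      then have "1 \<le> D" unfolding D using sin_cos_squared_add[of "Arg w"] by linarith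
      moreover have "t\<^sup>2 \<le> 1" using assms by (simp add: power_le_one)
      ultimately show ?thesis by simp
    next
      case False
      then have "t\<^sup>2 / 4 \<le> (sin (Arg w))\<^sup>2"
        using \<theta> assms Arg_bounded[of w] by (intro sin_squared_ge) auto
      then show ?thesis unfolding D using zero_le_power2[of "a - cos (Arg w)"] by linarith
    qed
  qed
  moreover have "0 < t\<^sup>2 / 4" using assms by simp
  ultimately have "h\<^sup>2 / D \<le> h\<^sup>2 / (t\<^sup>2 / 4)"
    using zero_le_power2[of h] by (intro divide_left_mono mult_pos_pos) linarith+
  then show ?thesis using assms by (simp add: norm_u_fun D_def w_def mult.commute)
qed

lemma u_fun_dyadic_layer:
  assumes "norm \<xi> = 1" "0 < h" "2 ^ K * h \<le> 1" "norm z \<le> 1"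
  obtains k where "k \<le> Suc K" "norm (u_fun \<xi> (1 - h) z) \<le> 16 / 4 ^ k"
    and "k \<le> K \<Longrightarrow> z \<in> window \<xi> (2 ^ k * h)"
proof -
  have "1 * h \<le> 2 ^ K * h" using assms(2) by (intro mult_right_mono one_le_power) auto
  then have h1: "h \<le> 1" using assms(3) by simp
  have outside: "norm (u_fun \<xi> (1 - h) z) \<le> 16 / 4 ^ Suc j"
    if "j \<le> K" "z \<notin> window \<xi> (2 ^ j * h)" for j
  proof -
    have "(2::real) ^ j * h \<le> 2 ^ K * h"
      using that assms by (intro mult_right_mono power_increasing) auto
    then have "2 ^ j * h \<le> 1" using assms(3) by linarith
    then have "norm (u_fun \<xi> (1 - h) z) \<le> 4 * h\<^sup>2 / (2 ^ j * h)\<^sup>2"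
      using that assms h1 by (intro norm_u_fun_outside_window_le) auto
    also have "\<dots> = 16 / 4 ^ Suc j"
    proof -
      have "(4::real) ^ j = 2 ^ (j * 2)" unfolding mult.commute[of j 2] power_mult by simp
      then show ?thesis
        using assms(2) by (simp add: power_mult_distrib field_simps flip: power_mult)
    qed
    finally show ?thesis .
  qed
  show ?thesis
  proof (cases "\<exists>k\<le>K. z \<in> window \<xi> (2 ^ k * h)")
    case True
    then obtain k0 where k0: "k0 \<le> K" "z \<in> window \<xi> (2 ^ k0 * h)"
      and below: "\<And>i. i < k0 \<Longrightarrow> z \<notin> window \<xi> (2 ^ i * h)"
      using ex_least_nat_le[of "\<lambda>k. z \<in> window \<xi> (2 ^ k * h)"] by (metis order.trans)
    have "norm (u_fun \<xi> (1 - h) z) \<le> 16 / 4 ^ k0"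
    proof (cases k0)
      case 0
      then show ?thesis using norm_u_fun_le_one[OF assms(1,2) h1 assms(4)] by simp
    next
      case (Suc j)
      then show ?thesis using outside[of j] below[of j] k0 by simp
    qed
    with k0 show ?thesis by (intro that[of k0]) auto
  next
    case False
    then show ?thesis using outside[of K] by (intro that[of "Suc K"]) auto
  qed
qed

lemma u_fun_dyadic_layers_le:
  assumes "norm \<xi> = 1" "0 < h" "2 ^ K * h \<le> 1" "norm z \<le> 1"
    and g: "mono_on {0..} g" "\<And>r. 0 \<le> r \<Longrightarrow> 0 \<le> g r"
  shows "ennreal (g (norm (u_fun \<xi> (1 - h) z)))
    \<le> (\<Sum>k\<le>K. ennreal (g (16 / 4 ^ k)) * indicator (window \<xi> (2 ^ k * h)) z)
       + ennreal (g (16 / 4 ^ Suc K))"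
proof -
  obtain k where k: "k \<le> Suc K" "norm (u_fun \<xi> (1 - h) z) \<le> 16 / 4 ^ k"
    and layer: "k \<le> K \<Longrightarrow> z \<in> window \<xi> (2 ^ k * h)"
    using u_fun_dyadic_layer[OF assms(1-4)] by blast
  have "ennreal (g (norm (u_fun \<xi> (1 - h) z))) \<le> ennreal (g (16 / 4 ^ k))"
    using k g by (intro ennreal_leI mono_onD[OF g(1)]) auto
  also have "\<dots> \<le> (\<Sum>k\<le>K. ennreal (g (16 / 4 ^ k)) * indicator (window \<xi> (2 ^ k * h)) z)
                   + ennreal (g (16 / 4 ^ Suc K))"
  proof (cases "k \<le> K")
    case True
    then have "ennreal (g (16 / 4 ^ k)) = ennreal (g (16 / 4 ^ k)) * indicator (window \<xi> (2 ^ k * h)) z"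
      using layer by simp
    also have "\<dots> \<le> (\<Sum>k\<le>K. ennreal (g (16 / 4 ^ k)) * indicator (window \<xi> (2 ^ k * h)) z)"
      using True by (intro member_le_sum) auto
    finally show ?thesis by (simp add: add_increasing2)
  next
    case False
    then have "k = Suc K" using k by simp
    then show ?thesis by (simp add: add_increasing)
  qed
  finally show ?thesis .
qed

lemma borel_measurable_Arg [measurable]: "Arg \<in> borel_measurable borel"
proof -
  have open_set: "{z \<in> space borel. z \<in> - \<real>\<^sub>\<le>\<^sub>0} \<in> sets (borel :: complex measure)"
    using borel_open[OF open_Compl[OF closed_nonpos_Reals_complex]] by (simp add: Compl_eq)
  have "Arg \<in> borel_measurable (restrict_space borel (- \<real>\<^sub>\<le>\<^sub>0))"
    by (rule borel_measurable_continuous_on_restrict[OF continuous_on_Arg])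
  moreover have "(\<lambda>z::complex. if z = 0 then 0 else pi) \<in> borel_measurable (restrict_space borel \<real>\<^sub>\<le>\<^sub>0)"
    by (rule measurable_restrict_space1) measurable
  ultimately have "(\<lambda>z. if z \<in> - \<real>\<^sub>\<le>\<^sub>0 then Arg z else if z = 0 then 0 else pi) \<in> borel_measurable borel"
    unfolding measurable_If_restrict_space_iff[OF open_set] by (simp add: Compl_eq[symmetric])
  also have "(\<lambda>z. if z \<in> - \<real>\<^sub>\<le>\<^sub>0 then Arg z else if z = 0 then 0 else pi) = Arg"
    by (auto simp: fun_eq_iff Arg_zero Arg_eq_pi_iff nonpos_Reals_def complex_is_Real_iff
          simp flip: complex_eq_iff)
  finally show ?thesis .
qed

locale orlicz_disc_measure = finite_measure \<mu> for \<mu> :: "complex measure" +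
  fixes \<Psi> :: "real \<Rightarrow> real"
  assumes orlicz: "orlicz_function \<Psi>"
    and sets_disc: "sets \<mu> = sets (restrict_space borel (cball 0 1))"
begin

lemma space_disc: "space \<mu> = cball 0 1"
  using sets_eq_imp_space_eq[OF sets_disc] by (simp add: space_restrict_space)

lemma window_in_sets: "window \<xi> h \<in> sets \<mu>"
proof -
  have "window \<xi> h \<in> sets borel" unfolding window_def by measurable
  then show ?thesis
    unfolding sets_disc by (subst sets_restrict_space_iff) (auto simp: window_def)
qed

lemma nn_integral_u_fun_dyadic_le:
  assumes "norm \<xi> = 1" "0 < h" "2 ^ K * h \<le> 1"
    and g: "mono_on {0..} g" "\<And>r. 0 \<le> r \<Longrightarrow> 0 \<le> g r"
  shows "(\<integral>\<^sup>+z. ennreal (g (norm (u_fun \<xi> (1 - h) z))) \<partial>\<mu>)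
    \<le> ennreal ((\<Sum>k\<le>K. g (16 / 4 ^ k) * measure \<mu> (window \<xi> (2 ^ k * h)))
                + g (16 / 4 ^ Suc K) * measure \<mu> (space \<mu>))"
proof -
  define W where "W k = window \<xi> (2 ^ k * h)" for k :: nat
  have W[measurable]: "W k \<in> sets \<mu>" for k unfolding W_def by (rule window_in_sets)
  have "ennreal (g (norm (u_fun \<xi> (1 - h) z)))
      \<le> (\<Sum>k\<le>K. ennreal (g (16 / 4 ^ k)) * indicator (W k) z) + ennreal (g (16 / 4 ^ Suc K))"
    if "z \<in> space \<mu>" for z
    using that space_disc unfolding W_def by (intro u_fun_dyadic_layers_le assms) auto
  then have "(\<integral>\<^sup>+z. ennreal (g (norm (u_fun \<xi> (1 - h) z))) \<partial>\<mu>)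
      \<le> (\<integral>\<^sup>+z. (\<Sum>k\<le>K. ennreal (g (16 / 4 ^ k)) * indicator (W k) z)
                 + ennreal (g (16 / 4 ^ Suc K)) \<partial>\<mu>)"
    by (intro nn_integral_mono)
  also have "\<dots> = (\<integral>\<^sup>+z. (\<Sum>k\<le>K. ennreal (g (16 / 4 ^ k)) * indicator (W k) z) \<partial>\<mu>)
                  + (\<integral>\<^sup>+z. ennreal (g (16 / 4 ^ Suc K)) \<partial>\<mu>)"
    by (rule nn_integral_add; measurable)
  also have "\<dots> = (\<Sum>k\<le>K. ennreal (g (16 / 4 ^ k)) * emeasure \<mu> (W k))
                  + ennreal (g (16 / 4 ^ Suc K)) * emeasure \<mu> (space \<mu>)"
    by (subst nn_integral_sum) (auto intro!: sum.cong nn_integral_cmult_indicator)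
  also have "\<dots> = ennreal (\<Sum>k\<le>K. g (16 / 4 ^ k) * measure \<mu> (W k))
                  + ennreal (g (16 / 4 ^ Suc K) * measure \<mu> (space \<mu>))"
    by (simp add: emeasure_eq_measure g(2) flip: ennreal_mult'')
  also have "\<dots> = ennreal ((\<Sum>k\<le>K. g (16 / 4 ^ k) * measure \<mu> (W k))
                  + g (16 / 4 ^ Suc K) * measure \<mu> (space \<mu>))"
    using g(2) by (intro ennreal_plus[symmetric] sum_nonneg mult_nonneg_nonneg) auto
  finally show ?thesis unfolding W_def .
qed

lemma u_fun_modular_le_one:
  assumes "norm \<xi> = 1" "0 < h" "h \<le> 1"
  shows "orlicz_modular \<Psi> \<mu> (u_fun \<xi> (1 - h)) (max 1 (\<Psi> 1 * measure \<mu> (space \<mu>))) \<le> 1"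
  using assms norm_u_fun_le_one space_disc
  by (intro orlicz_modular_le_one_if_bounded[OF orlicz finite_measure_axioms]) auto

lemma u_fun_norm_nonneg:
  assumes "norm \<xi> = 1" "0 < h" "h \<le> 1"
  shows "0 \<le> orlicz_norm \<Psi> \<mu> (u_fun \<xi> (1 - h))"
  using u_fun_modular_le_one[OF assms] by (intro orlicz_norm_nonneg) auto

lemma u_fun_norm_le_const:
  assumes "norm \<xi> = 1" "0 < h" "h \<le> 1"
  shows "orlicz_norm \<Psi> \<mu> (u_fun \<xi> (1 - h)) \<le> max 1 (\<Psi> 1 * measure \<mu> (space \<mu>))"
  using u_fun_modular_le_one[OF assms] by (intro orlicz_norm_le) auto

lemma window_measure_le_if_modular:
  assumes "norm \<xi> = 1" "0 < h" "h < 1" "0 < c"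
    and "orlicz_modular \<Psi> \<mu> (u_fun \<xi> (1 - h)) c \<le> 1"
  shows "measure \<mu> (window \<xi> h) * \<Psi> (1 / (5 * c)) \<le> 1"
proof -
  have "(\<integral>\<^sup>+z. ennreal (\<Psi> (1 / (5 * c))) * indicator (window \<xi> h) z \<partial>\<mu>)
      \<le> orlicz_modular \<Psi> \<mu> (u_fun \<xi> (1 - h)) c"
    unfolding orlicz_modular_def
  proof (intro nn_integral_mono)
    fix z
    show "ennreal (\<Psi> (1 / (5 * c))) * indicator (window \<xi> h) z
        \<le> ennreal (\<Psi> (norm (u_fun \<xi> (1 - h) z) / c))"
    proof (cases "z \<in> window \<xi> h")
      case True
      then have "1 / 5 / c \<le> norm (u_fun \<xi> (1 - h) z) / c"
        using norm_u_fun_window_ge assms by (intro divide_right_mono) auto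
      then show ?thesis
        using True assms by (auto intro!: ennreal_leI orlicz_function_mono[OF orlicz])
    qed simp
  qed
  also have "\<dots> \<le> 1" by fact
  finally have "ennreal (\<Psi> (1 / (5 * c)) * measure \<mu> (window \<xi> h)) \<le> ennreal 1"
    by (simp add: nn_integral_cmult_indicator window_in_sets emeasure_eq_measure ennreal_mult'')
  then show ?thesis
    using assms orlicz_function_nonneg[OF orlicz, of "1 / (5 * c)"] by (simp add: mult.commute)
qed

lemma window_measure_le_if_u_fun_norm_le:
  assumes "norm \<xi> = 1" "0 < h" "h < 1" "0 < N"
    and norm_le: "orlicz_norm \<Psi> \<mu> (u_fun \<xi> (1 - h)) \<le> N / orlicz_inv \<Psi> (1 / h)"
    and "0 < A" "10 * N * A \<le> 1"
  shows "measure \<mu> (window \<xi> h) * \<Psi> (A * orlicz_inv \<Psi> (1 / h)) \<le> 10 * N * A"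
proof -
  define y where "y = orlicz_inv \<Psi> (1 / h)"
  have y0: "0 < y" unfolding y_def using assms orlicz by (simp add: orlicz_inv_pos)
  \<comment> \<open>the infimum defining the norm need not be attained, hence the margin \<open>2N\<close>\<close>
  have "N / y < 2 * N / y" using assms y0 by (simp add: divide_strict_right_mono)
  then have "orlicz_norm \<Psi> \<mu> (u_fun \<xi> (1 - h)) < 2 * N / y"
    using norm_le unfolding y_def by linarith
  then have "orlicz_modular \<Psi> \<mu> (u_fun \<xi> (1 - h)) (2 * N / y) \<le> 1"
    using orlicz_modular_le_one_if_norm_less[OF orlicz _ u_fun_modular_le_one] assms by simp
  then have W: "measure \<mu> (window \<xi> h) * \<Psi> (y / (10 * N)) \<le> 1"
    using window_measure_le_if_modular[OF assms(1-3), of "2 * N / y"] assms y0 by simp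
  have "A * y = (10 * N * A) * (y / (10 * N))" using assms by (simp add: field_simps)
  then have "\<Psi> (A * y) \<le> 10 * N * A * \<Psi> (y / (10 * N))"
    using assms y0 by (simp only:) (intro orlicz_function_scale_le[OF orlicz], auto)
  then have "measure \<mu> (window \<xi> h) * \<Psi> (A * y)
      \<le> measure \<mu> (window \<xi> h) * (10 * N * A * \<Psi> (y / (10 * N)))"
    by (intro mult_left_mono) auto
  also have "\<dots> = 10 * N * A * (measure \<mu> (window \<xi> h) * \<Psi> (y / (10 * N)))"
    by (rule mult.left_commute)
  also have "\<dots> \<le> 10 * N * A * 1"
    using W assms by (intro mult_left_mono) auto
  finally show ?thesis unfolding y_def by simp
qed

lemma u_fun_modular_le_dyadic:
  assumes "norm \<xi> = 1" "0 < h" "2 ^ K * h \<le> 1" "0 < c"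
  shows "orlicz_modular \<Psi> \<mu> (u_fun \<xi> (1 - h)) c
    \<le> ennreal ((\<Sum>k\<le>K. \<Psi> (16 / 4 ^ k / c) * measure \<mu> (window \<xi> (2 ^ k * h)))
                + \<Psi> (16 / 4 ^ Suc K / c) * measure \<mu> (space \<mu>))"
  unfolding orlicz_modular_def
proof (rule nn_integral_u_fun_dyadic_le[OF assms(1-3)])
  show "mono_on {0..} (\<lambda>r. \<Psi> (r / c))"
    using assms(4) by (intro mono_onI orlicz_function_mono[OF orlicz] divide_right_mono) auto
qed (use assms(4) in \<open>auto intro: orlicz_function_nonneg[OF orlicz]\<close>)

lemma u_fun_norm_le_if_carleson:
  assumes "norm \<xi> = 1" "0 < h" "h < d" "d \<le> 1" "0 < A" "64 / A \<le> C"
    and carleson: "\<And>t. 0 < t \<Longrightarrow> t < d \<Longrightarrow> measure \<mu> (window \<xi> t) * \<Psi> (A * orlicz_inv \<Psi> (1 / t)) \<le> 1"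
    and small: "32 * h * (measure \<mu> (space \<mu>) + 1) \<le> d\<^sup>2 * C"
  shows "orlicz_norm \<Psi> \<mu> (u_fun \<xi> (1 - h)) \<le> C / orlicz_inv \<Psi> (1 / h)"
proof -
  define y where "y = orlicz_inv \<Psi> (1 / h)"
  define M where "M = measure \<mu> (space \<mu>)"
  have y0: "0 < y" unfolding y_def using assms orlicz by (simp add: orlicz_inv_pos)
  have "0 < 64 / A" using assms by simp
  then have C0: "0 < C" using assms by linarith
  have M0: "0 \<le> M" unfolding M_def by simp
  obtain K where K: "2 ^ K * h < d" "d \<le> 2 ^ Suc K * h"
    using obtain_dyadic_scale[OF assms(2,3)] .
  have scale_lt: "2 ^ k * h < d" if "k \<le> K" for k
  proof -
    have "(2::real) ^ k * h \<le> 2 ^ K * h" using that assms by (intro mult_right_mono power_increasing) auto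
    then show ?thesis using K by linarith
  qed
  have layers: "(\<Sum>k\<le>K. \<Psi> (16 / 4 ^ k * y / C) * measure \<mu> (window \<xi> (2 ^ k * h))) \<le> 1 / 2"
    unfolding y_def using carleson scale_lt assms
    by (intro orlicz_dyadic_sum_le_half[OF orlicz]) auto
  have "0 \<le> 32 * h * M" using M0 assms by simp
  then have "16 * h \<le> d\<^sup>2 * C" using small assms(2) unfolding M_def[symmetric] distrib_left by linarith
  then have "\<Psi> (16 / 4 ^ Suc K * y / C) * M \<le> 16 * h / (d\<^sup>2 * C) * M"
    unfolding y_def using K assms C0 M0
    by (intro mult_right_mono orlicz_dyadic_tail_le[OF orlicz]) auto
  also have "\<dots> \<le> 1 / 2"
    using small assms C0 M0 unfolding M_def by (simp add: field_simps)
  finally have tail: "\<Psi> (16 / 4 ^ Suc K * y / C) * M \<le> 1 / 2" .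
  have "orlicz_modular \<Psi> \<mu> (u_fun \<xi> (1 - h)) (C / y)
      \<le> ennreal ((\<Sum>k\<le>K. \<Psi> (16 / 4 ^ k * y / C) * measure \<mu> (window \<xi> (2 ^ k * h)))
                  + \<Psi> (16 / 4 ^ Suc K * y / C) * M)"
    using u_fun_modular_le_dyadic[of \<xi> h K "C / y"] K assms C0 y0 unfolding M_def by simp
  also have "\<dots> \<le> ennreal 1"
    using layers tail by (intro ennreal_leI) simp
  finally show ?thesis
    unfolding y_def using C0 y0 by (intro orlicz_norm_le) (auto simp: y_def)
qed

lemma window_measure_le_rho:
  assumes "\<xi> \<in> sphere 0 1"
  shows "measure \<mu> (window \<xi> h) \<le> rho \<mu> h"
  unfolding rho_def using assms bounded_measure by (intro cSUP_upper bdd_aboveI2) auto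

lemma rho_le_iff: "rho \<mu> h \<le> B \<longleftrightarrow> (\<forall>\<xi>\<in>sphere 0 1. measure \<mu> (window \<xi> h) \<le> B)"
  unfolding rho_def using bounded_measure
  by (intro cSUP_le_iff bdd_aboveI2) (auto simp: sphere_def dist_norm intro: exI[of _ 1])

lemma rho_nonneg: "0 \<le> rho \<mu> h"
  using order_trans[OF measure_nonneg window_measure_le_rho[of 1]] by simp

lemma sup_u_fun_norm_le_iff:
  assumes "0 < h" "h < 1"
  shows "(SUP \<xi>\<in>sphere 0 1. orlicz_inv \<Psi> (1 / h) * orlicz_norm \<Psi> \<mu> (u_fun \<xi> (1 - h))) \<le> B
     \<longleftrightarrow> (\<forall>\<xi>\<in>sphere 0 1. orlicz_inv \<Psi> (1 / h) * orlicz_norm \<Psi> \<mu> (u_fun \<xi> (1 - h)) \<le> B)"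
proof (rule cSUP_le_iff)
  show "sphere (0::complex) 1 \<noteq> {}" by (auto simp: sphere_def dist_norm intro: exI[of _ 1])
  have "0 \<le> orlicz_inv \<Psi> (1 / h)" using assms by (intro orlicz_inv_nonneg[OF orlicz]) auto
  then show "bdd_above ((\<lambda>\<xi>. orlicz_inv \<Psi> (1 / h) * orlicz_norm \<Psi> \<mu> (u_fun \<xi> (1 - h))) ` sphere 0 1)"
    using u_fun_norm_le_const assms
    by (intro bdd_aboveI2[of _ _ "orlicz_inv \<Psi> (1 / h) * max 1 (\<Psi> 1 * measure \<mu> (space \<mu>))"]
          mult_left_mono) auto
qed

lemma sup_u_fun_norm_nonneg:
  assumes "0 < h" "h < 1"
  shows "0 \<le> (SUP \<xi>\<in>sphere 0 1. orlicz_inv \<Psi> (1 / h) * orlicz_norm \<Psi> \<mu> (u_fun \<xi> (1 - h)))"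
proof -
  have "0 \<le> orlicz_inv \<Psi> (1 / h) * orlicz_norm \<Psi> \<mu> (u_fun 1 (1 - h))"
    using assms by (intro mult_nonneg_nonneg orlicz_inv_nonneg[OF orlicz] u_fun_norm_nonneg) auto
  also have "\<dots> \<le> (SUP \<xi>\<in>sphere 0 1. orlicz_inv \<Psi> (1 / h) * orlicz_norm \<Psi> \<mu> (u_fun \<xi> (1 - h)))"
    using sup_u_fun_norm_le_iff[OF assms] by (metis mem_sphere_0 norm_one order_refl)
  finally show ?thesis .
qed

lemma u_fun_norm_le_if_psi_carleson:
  assumes "psi_carleson \<Psi> \<mu>"
  shows "\<exists>C\<ge>1. \<forall>\<xi>\<in>sphere 0 1. \<forall>h\<in>{0<..<1}.
           orlicz_norm \<Psi> \<mu> (u_fun \<xi> (1 - h)) \<le> C / orlicz_inv \<Psi> (1 / h)"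
proof -
  obtain A where A: "0 < A" and carleson: "\<And>\<xi> h. \<xi> \<in> sphere 0 1 \<Longrightarrow> h \<in> {0<..<1} \<Longrightarrow>
      measure \<mu> (window \<xi> h) \<le> 1 / \<Psi> (A * orlicz_inv \<Psi> (1 / h))"
    using assms unfolding psi_carleson_def by blast
  define M where "M = measure \<mu> (space \<mu>)"
  define C where "C = max 1 (max (64 / A) (32 * (M + 1)))"
  have "orlicz_norm \<Psi> \<mu> (u_fun \<xi> (1 - h)) \<le> C / orlicz_inv \<Psi> (1 / h)"
    if \<xi>: "\<xi> \<in> sphere 0 1" and h: "h \<in> {0<..<1}" for \<xi> h
  proof (rule u_fun_norm_le_if_carleson)
    show "measure \<mu> (window \<xi> t) * \<Psi> (A * orlicz_inv \<Psi> (1 / t)) \<le> 1" if "0 < t" "t < 1" for t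
    proof -
      have "0 < \<Psi> (A * orlicz_inv \<Psi> (1 / t))"
        using A that by (intro orlicz_function_pos[OF orlicz] mult_pos_pos orlicz_inv_pos[OF orlicz]) auto
      then show ?thesis using carleson[OF \<xi>, of t] that by (simp add: le_divide_eq)
    qed
    have "h * (32 * (M + 1)) \<le> 1 * (32 * (M + 1))"
      using h unfolding M_def by (intro mult_right_mono) auto
    then have "32 * h * (M + 1) \<le> 32 * (M + 1)" by (simp add: mult_ac)
    then show "32 * h * (measure \<mu> (space \<mu>) + 1) \<le> 1\<^sup>2 * C"
      unfolding C_def M_def by simp
  qed (use \<xi> h A in \<open>auto simp: C_def\<close>)
  moreover have "1 \<le> C" unfolding C_def by simp
  ultimately show ?thesis by blast
qed

lemma psi_carleson_if_u_fun_norm_le: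
  assumes "\<exists>C\<ge>1. \<forall>\<xi>\<in>sphere 0 1. \<forall>h\<in>{0<..<1}.
             orlicz_norm \<Psi> \<mu> (u_fun \<xi> (1 - h)) \<le> C / orlicz_inv \<Psi> (1 / h)"
  shows "psi_carleson \<Psi> \<mu>"
proof -
  obtain C where C: "1 \<le> C" and norm_le: "\<And>\<xi> h. \<xi> \<in> sphere 0 1 \<Longrightarrow> h \<in> {0<..<1} \<Longrightarrow>
      orlicz_norm \<Psi> \<mu> (u_fun \<xi> (1 - h)) \<le> C / orlicz_inv \<Psi> (1 / h)"
    using assms by blast
  define A where "A = 1 / (10 * C)"
  have A: "0 < A" "10 * C * A = 1" unfolding A_def using C by auto
  have "measure \<mu> (window \<xi> h) \<le> 1 / \<Psi> (A * orlicz_inv \<Psi> (1 / h))"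
    if \<xi>: "\<xi> \<in> sphere 0 1" and h: "h \<in> {0<..<1}" for \<xi> h
  proof -
    have "measure \<mu> (window \<xi> h) * \<Psi> (A * orlicz_inv \<Psi> (1 / h)) \<le> 1"
      using window_measure_le_if_u_fun_norm_le[of \<xi> h C A] norm_le[OF \<xi> h] \<xi> h A C by auto
    moreover have "0 < \<Psi> (A * orlicz_inv \<Psi> (1 / h))"
      using A h by (intro orlicz_function_pos[OF orlicz] mult_pos_pos orlicz_inv_pos[OF orlicz]) auto
    ultimately show ?thesis by (simp add: le_divide_eq)
  qed
  then show ?thesis unfolding psi_carleson_def using A by blast
qed

lemma sup_u_fun_norm_le_if_carleson:
  assumes "0 < h" "h < d" "d \<le> 1" "0 < \<epsilon>"
    and carleson: "\<And>\<xi> t. \<xi> \<in> sphere 0 1 \<Longrightarrow> 0 < t \<Longrightarrow> t < d \<Longrightarrow>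
      measure \<mu> (window \<xi> t) * \<Psi> (64 / \<epsilon> * orlicz_inv \<Psi> (1 / t)) \<le> 1"
    and small: "32 * h * (measure \<mu> (space \<mu>) + 1) \<le> d\<^sup>2 * \<epsilon>"
  shows "(SUP \<xi>\<in>sphere 0 1. orlicz_inv \<Psi> (1 / h) * orlicz_norm \<Psi> \<mu> (u_fun \<xi> (1 - h))) \<le> \<epsilon>"
proof -
  have "orlicz_inv \<Psi> (1 / h) * orlicz_norm \<Psi> \<mu> (u_fun \<xi> (1 - h)) \<le> \<epsilon>"
    if \<xi>: "\<xi> \<in> sphere 0 1" for \<xi>
  proof -
    have "orlicz_norm \<Psi> \<mu> (u_fun \<xi> (1 - h)) \<le> \<epsilon> / orlicz_inv \<Psi> (1 / h)"
      using assms carleson[OF \<xi>] \<xi> by (intro u_fun_norm_le_if_carleson[of \<xi> h d "64 / \<epsilon>"]) auto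
    moreover have "0 < orlicz_inv \<Psi> (1 / h)" using assms by (intro orlicz_inv_pos[OF orlicz]) auto
    ultimately show ?thesis by (simp add: field_simps)
  qed
  then show ?thesis using assms by (subst sup_u_fun_norm_le_iff) auto
qed

lemma tendsto_sup_u_fun_norm_if_vanishing:
  assumes "vanishing_psi_carleson \<Psi> \<mu>"
  shows "((\<lambda>h. SUP \<xi>\<in>sphere 0 1. orlicz_inv \<Psi> (1 / h) * orlicz_norm \<Psi> \<mu> (u_fun \<xi> (1 - h)))
           \<longlongrightarrow> 0) (at_right 0)"
proof (rule tendsto_zero_if_eventually_le)
  show "\<forall>\<^sub>F h in at_right 0. 0 \<le> (SUP \<xi>\<in>sphere 0 1. orlicz_inv \<Psi> (1 / h) * orlicz_norm \<Psi> \<mu> (u_fun \<xi> (1 - h)))"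
    unfolding eventually_at_right_field by (auto intro!: exI[of _ 1] sup_u_fun_norm_nonneg)
  fix \<epsilon> :: real assume "0 < \<epsilon>"
  define M where "M = measure \<mu> (space \<mu>)"
  have "((\<lambda>h. \<Psi> (64 / \<epsilon> * orlicz_inv \<Psi> (1 / h)) * rho \<mu> h) \<longlongrightarrow> 0) (at_right 0)"
    using assms \<open>0 < \<epsilon>\<close> unfolding vanishing_psi_carleson_def by (simp del: times_divide_eq_left)
  then have "\<forall>\<^sub>F h in at_right 0. \<Psi> (64 / \<epsilon> * orlicz_inv \<Psi> (1 / h)) * rho \<mu> h < 1"
    by (rule order_tendstoD) simp
  then obtain b where b: "0 < b"
    and rho_small: "\<And>t. 0 < t \<Longrightarrow> t < b \<Longrightarrow> \<Psi> (64 / \<epsilon> * orlicz_inv \<Psi> (1 / t)) * rho \<mu> t < 1"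
    unfolding eventually_at_right_field by auto
  define d where "d = min b 1"
  have d: "0 < d" "d \<le> 1" "d \<le> b" unfolding d_def using b by auto
  have carleson: "measure \<mu> (window \<xi> t) * \<Psi> (64 / \<epsilon> * orlicz_inv \<Psi> (1 / t)) \<le> 1"
    if "\<xi> \<in> sphere 0 1" "0 < t" "t < d" for \<xi> t
  proof -
    have "measure \<mu> (window \<xi> t) * \<Psi> (64 / \<epsilon> * orlicz_inv \<Psi> (1 / t))
        \<le> rho \<mu> t * \<Psi> (64 / \<epsilon> * orlicz_inv \<Psi> (1 / t))"
      using window_measure_le_rho[OF that(1)] that \<open>0 < \<epsilon>\<close>
      by (intro mult_right_mono orlicz_function_nonneg[OF orlicz] mult_nonneg_nonneg
            orlicz_inv_nonneg[OF orlicz]) auto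
    also have "\<dots> \<le> 1" using rho_small[of t] that d by (simp add: mult.commute)
    finally show ?thesis .
  qed
  define h0 where "h0 = min d (d\<^sup>2 * \<epsilon> / (32 * (M + 1)))"
  have M1: "0 < 32 * (M + 1)" unfolding M_def by (simp add: add_nonneg_pos)
  then have "0 < h0" unfolding h0_def using d \<open>0 < \<epsilon>\<close> by simp
  then have "\<forall>\<^sub>F h in at_right 0. 0 < h \<and> h < h0"
    unfolding eventually_at_right_field by blast
  then show "\<forall>\<^sub>F h in at_right 0.
      (SUP \<xi>\<in>sphere 0 1. orlicz_inv \<Psi> (1 / h) * orlicz_norm \<Psi> \<mu> (u_fun \<xi> (1 - h))) \<le> \<epsilon>"
  proof eventually_elim
    case (elim h)
    then have "h * (32 * (M + 1)) < d\<^sup>2 * \<epsilon>" using M1 by (simp add: h0_def less_divide_eq)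
    then show ?case
      using elim d \<open>0 < \<epsilon>\<close> carleson unfolding M_def h0_def
      by (intro sup_u_fun_norm_le_if_carleson[of h d]) (auto simp: mult_ac)
  qed
qed

lemma rho_le_if_sup_u_fun_norm_le:
  assumes "0 < h" "h < 1" "0 < N" "0 < A" "10 * N * A \<le> 1"
    and "(SUP \<xi>\<in>sphere 0 1. orlicz_inv \<Psi> (1 / h) * orlicz_norm \<Psi> \<mu> (u_fun \<xi> (1 - h))) \<le> N"
  shows "\<Psi> (A * orlicz_inv \<Psi> (1 / h)) * rho \<mu> h \<le> 10 * N * A"
proof -
  define y where "y = orlicz_inv \<Psi> (1 / h)"
  have y0: "0 < y" unfolding y_def using assms by (intro orlicz_inv_pos[OF orlicz]) auto
  have PA: "0 < \<Psi> (A * y)" using assms y0 by (intro orlicz_function_pos[OF orlicz]) auto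
  have "measure \<mu> (window \<xi> h) \<le> 10 * N * A / \<Psi> (A * y)" if \<xi>: "\<xi> \<in> sphere 0 1" for \<xi>
  proof -
    have "y * orlicz_norm \<Psi> \<mu> (u_fun \<xi> (1 - h)) \<le> N"
      using assms(6) sup_u_fun_norm_le_iff[OF assms(1,2)] \<xi> unfolding y_def by blast
    then have "orlicz_norm \<Psi> \<mu> (u_fun \<xi> (1 - h)) \<le> N / y" using y0 by (simp add: field_simps)
    then have "measure \<mu> (window \<xi> h) * \<Psi> (A * y) \<le> 10 * N * A"
      using \<xi> assms unfolding y_def by (intro window_measure_le_if_u_fun_norm_le) auto
    then show ?thesis using PA by (simp add: le_divide_eq)
  qed
  then have "rho \<mu> h \<le> 10 * N * A / \<Psi> (A * y)" by (simp add: rho_le_iff)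
  then show ?thesis using PA unfolding y_def[symmetric] by (simp add: le_divide_eq mult.commute)
qed

lemma vanishing_if_tendsto_sup_u_fun_norm:
  assumes "((\<lambda>h. SUP \<xi>\<in>sphere 0 1. orlicz_inv \<Psi> (1 / h) * orlicz_norm \<Psi> \<mu> (u_fun \<xi> (1 - h)))
             \<longlongrightarrow> 0) (at_right 0)"
  shows "vanishing_psi_carleson \<Psi> \<mu>"
  unfolding vanishing_psi_carleson_def
proof (intro allI impI tendsto_zero_if_eventually_le)
  fix A :: real assume A: "0 < A"
  show "\<forall>\<^sub>F h in at_right 0. 0 \<le> \<Psi> (A * orlicz_inv \<Psi> (1 / h)) * rho \<mu> h"
    unfolding eventually_at_right_field using A rho_nonneg
    by (auto intro!: exI[of _ 1] mult_nonneg_nonneg orlicz_function_nonneg[OF orlicz]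
          orlicz_inv_nonneg[OF orlicz])
  fix \<epsilon> :: real assume "0 < \<epsilon>"
  define N where "N = min 1 \<epsilon> / (10 * A)"
  have N: "0 < N" "10 * N * A \<le> 1" "10 * N * A \<le> \<epsilon>" unfolding N_def using A \<open>0 < \<epsilon>\<close> by auto
  have "\<forall>\<^sub>F h in at_right 0.
      (SUP \<xi>\<in>sphere 0 1. orlicz_inv \<Psi> (1 / h) * orlicz_norm \<Psi> \<mu> (u_fun \<xi> (1 - h))) < N"
    using assms N(1) by (rule order_tendstoD)
  moreover have "\<forall>\<^sub>F h in at_right 0. 0 < h \<and> h < (1::real)"
    unfolding eventually_at_right_field by (auto intro!: exI[of _ 1])
  ultimately show "\<forall>\<^sub>F h in at_right 0. \<Psi> (A * orlicz_inv \<Psi> (1 / h)) * rho \<mu> h \<le> \<epsilon>"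
  proof eventually_elim
    case (elim h)
    then have "\<Psi> (A * orlicz_inv \<Psi> (1 / h)) * rho \<mu> h \<le> 10 * N * A"
      using A N by (intro rho_le_if_sup_u_fun_norm_le) auto
    with N(3) show ?case by linarith
  qed
qed

end

theorem mainTheorem12:
  fixes \<Psi> :: "real \<Rightarrow> real" and \<mu> :: "complex measure"
  assumes "orlicz_function \<Psi>"
    and "finite_measure \<mu>"
    and "sets \<mu> = sets (restrict_space borel (cball (0::complex) 1))"
  shows "(psi_carleson \<Psi> \<mu> \<longleftrightarrow>
           (\<exists>C\<ge>1. \<forall>\<xi>\<in>sphere 0 1. \<forall>h\<in>{0<..<1}.
              orlicz_norm \<Psi> \<mu> (u_fun \<xi> (1 - h)) \<le> C / orlicz_inv \<Psi> (1 / h)))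
       \<and> (vanishing_psi_carleson \<Psi> \<mu> \<longleftrightarrow>
           ((\<lambda>h. SUP \<xi>\<in>sphere 0 1. orlicz_inv \<Psi> (1 / h) * orlicz_norm \<Psi> \<mu> (u_fun \<xi> (1 - h)))
              \<longlongrightarrow> 0) (at_right 0))"
proof -
  interpret orlicz_disc_measure \<mu> \<Psi>
    by (rule orlicz_disc_measure.intro[OF assms(2) orlicz_disc_measure_axioms.intro[OF assms(1,3)]])
  show ?thesis
    using u_fun_norm_le_if_psi_carleson psi_carleson_if_u_fun_norm_le
      tendsto_sup_u_fun_norm_if_vanishing vanishing_if_tendsto_sup_u_fun_norm
    by blast
qed

end
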